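(* Let $\mathcal X$ be an MRN with transition cocycle $P_{\mathcal X}$. The following are equivalent: (i) $\mathcal X$ converges in distribution; (ii) there exists an invariant distribution $p$ of $\mathcal X$ such that for every $q\in\Sigma_1^+$ and $\mu$-a.e. $\omega$, $\lim_{n\to\infty}|P_{\mathcal X}(n,\theta^{-n}\omega)q-p(\omega)|=0$; (iii) there exists an invariant distribution $p$ of $\mathcal X$ such that for every $q\in\Sigma_1^+$ and $\mu$-a.e. $\omega$, $\lim_{n\to\infty}|P_{\mathcal X}(n,\omega)q-p(\theta^n\omega)|=0$. Moreover, the invariant distributions in (ii) and (iii) are uniquely determined $\mu$-a.e. and coincide $\mu$-a.e.
   Context: Let $k\ge2$, $S=\{s_1,\dots,s_k\}$, $\mathbb K=\{1,\dots,k\}$; $|\cdot|$ is the $\ell^1$-norm on $\mathbb R^k$; $\Sigma_1^+=\{v\in\mathbb R^k:v_j\ge0,\sum_jv_j=1\}$. $\Theta=(\Omega,\mathcal F,\mu,\theta)$ is an invertible metric dynamical system (standard probability space, $\theta$ invertible, ergodic, $\mu$-preserving). A Markov random network (MRN) over $\Theta$ is a process $\mathcal X=(X_n)_{n\in\mathbb N_0}$ on $S\times\Omega$ such that $\omega\mapsto\mathbb P\{X_n=(s_i,\theta^n\omega)\mid X_0=(s_j,\omega)\}$ is measurable, transition probabilities between fibres sum to one, and the Markov property holds along fibres; its transition cocycle $P_{\mathcal X}(n,\omega)=(\mathbb P\{X_n=(s_i,\theta^n\omega)\mid X_0=(s_j,\omega)\})_{i,j}$ is, for $\mu$-a.e.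 $\omega$, column-stochastic with $P_{\mathcal X}(0,\omega)=I_k$ and $P_{\mathcal X}(m+n,\omega)=P_{\mathcal X}(m,\theta^n\omega)P_{\mathcal X}(n,\omega)$. An invariant distribution of $\mathcal X$ is an $\mathcal F$-measurable $p:\Omega\to\Sigma_1^+$ with $P_{\mathcal X}(n,\omega)p(\omega)=p(\theta^n\omega)$ for all $n\in\mathbb N_0$, $\mu$-a.e. $\omega$. $\mathcal X$ converges in distribution if for $\mu$-a.e. $\omega$, $\lim_{n\to\infty}|P_{\mathcal X}(n,\omega)u-P_{\mathcal X}(n,\omega)v|=0$ for all $u,v\in\Sigma_1^+$. *)

theory Defs
  imports "HOL-Probability.Probability"
begin

definition l1norm :: "real ^ 'k \<Rightarrow> real" where
  "l1norm v = (\<Sum>j\<in>UNIV. \<bar>v $ j\<bar>)"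

definition simplex1 :: "(real ^ 'k) set" where
  "simplex1 = {v. (\<forall>j. 0 \<le> v $ j) \<and> (\<Sum>j\<in>UNIV. v $ j) = 1}"

text \<open>Column-stochastic matrices (entry A \$ i \$ j is row i, column j).\<close>
definition column_stochastic :: "real ^ 'k ^ 'k \<Rightarrow> bool" where
  "column_stochastic A \<longleftrightarrow> (\<forall>i j. 0 \<le> A $ i $ j) \<and> (\<forall>j. (\<Sum>i\<in>UNIV. A $ i $ j) = 1)"

definition ergodic_map :: "'a measure \<Rightarrow> ('a \<Rightarrow> 'a) \<Rightarrow> bool" where
  "ergodic_map M \<theta> \<longleftrightarrow>
     (\<forall>A\<in>sets M. \<theta> -` A \<inter> space M = A \<longrightarrow> measure M A = 0 \<or> measure M A = 1)"

definition invertible_mds :: "'a measure \<Rightarrow> ('a \<Rightarrow> 'a) \<Rightarrow> bool" where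
  "invertible_mds M \<theta> \<longleftrightarrow>
     prob_space M \<and>
     \<theta> \<in> M \<rightarrow>\<^sub>M M \<and>
     bij_betw \<theta> (space M) (space M) \<and>
     inv_into (space M) \<theta> \<in> M \<rightarrow>\<^sub>M M \<and>
     distr M M \<theta> = M \<and>
     ergodic_map M \<theta>"

definition transition_cocycle ::
    "'a measure \<Rightarrow> ('a \<Rightarrow> 'a) \<Rightarrow> (nat \<Rightarrow> 'a \<Rightarrow> real ^ 'k ^ 'k) \<Rightarrow> bool" where
  "transition_cocycle M \<theta> P \<longleftrightarrow>
     (\<forall>n i j. (\<lambda>\<omega>. P n \<omega> $ i $ j) \<in> borel_measurable M) \<and>
     (AE \<omega> in M.
        (\<forall>n. column_stochastic (P n \<omega>)) \<and>
        P 0 \<omega> = mat 1 \<and>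
        (\<forall>m n. P (m + n) \<omega> = P m ((\<theta> ^^ n) \<omega>) ** P n \<omega>))"

definition invariant_distribution ::
    "'a measure \<Rightarrow> ('a \<Rightarrow> 'a) \<Rightarrow> (nat \<Rightarrow> 'a \<Rightarrow> real ^ 'k ^ 'k) \<Rightarrow> ('a \<Rightarrow> real ^ 'k) \<Rightarrow> bool" where
  "invariant_distribution M \<theta> P p \<longleftrightarrow>
     p \<in> borel_measurable M \<and>
     (\<forall>\<omega>\<in>space M. p \<omega> \<in> simplex1) \<and>
     (\<forall>n. AE \<omega> in M. P n \<omega> *v p \<omega> = p ((\<theta> ^^ n) \<omega>))"

definition converges_in_distribution ::
    "'a measure \<Rightarrow> (nat \<Rightarrow> 'a \<Rightarrow> real ^ 'k ^ 'k) \<Rightarrow> bool" where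
  "converges_in_distribution M P \<longleftrightarrow>
     (AE \<omega> in M. \<forall>u\<in>simplex1. \<forall>v\<in>simplex1.
        (\<lambda>n. l1norm (P n \<omega> *v u - P n \<omega> *v v)) \<longlonglongrightarrow> 0)"

definition pullback_attracting ::
    "'a measure \<Rightarrow> ('a \<Rightarrow> 'a) \<Rightarrow> (nat \<Rightarrow> 'a \<Rightarrow> real ^ 'k ^ 'k) \<Rightarrow> ('a \<Rightarrow> real ^ 'k) \<Rightarrow> bool" where
  "pullback_attracting M \<theta> P p \<longleftrightarrow>
     (\<forall>q\<in>simplex1. AE \<omega> in M.
        (\<lambda>n. l1norm (P n ((inv_into (space M) \<theta> ^^ n) \<omega>) *v q - p \<omega>)) \<longlonglongrightarrow> 0)"

definition forward_attracting ::
    "'a measure \<Rightarrow> ('a \<Rightarrow> 'a) \<Rightarrow> (nat \<Rightarrow> 'a \<Rightarrow> real ^ 'k ^ 'k) \<Rightarrow> ('a \<Rightarrow> real ^ 'k) \<Rightarrow> bool" where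
  "forward_attracting M \<theta> P p \<longleftrightarrow>
     (\<forall>q\<in>simplex1. AE \<omega> in M.
        (\<lambda>n. l1norm (P n \<omega> *v q - p ((\<theta> ^^ n) \<omega>))) \<longlonglongrightarrow> 0)"

end

theory Submission
  imports Defs
begin

text \<open>
  All three conditions are equivalent to the contraction coefficient of the cocycle, i.e.\ the
  largest \<open>\<ell>\<^sup>1\<close>-distance between two columns of a column-stochastic matrix, tending to zero.
  Along forward orbits this coefficient is non-increasing in \<open>n\<close> since \<open>P(n+1,\<omega>)\<close> is
  \<open>P(n,\<omega>)\<close> multiplied by a stochastic matrix from the left, and along pullback orbits
  \<open>\<theta>\<^sup>-\<^sup>n\<omega>\<close> it is non-increasing because the multiplication happens from the right.
  As \<open>\<theta>\<close> preserves \<open>\<mu>\<close>, the two non-increasing bounded sequences have the same integrals,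
  so one tends to zero a.e.\ iff the other does. When the pullback coefficient tends to zero,
  the pullback images of the simplex shrink to a point, which is the invariant distribution;
  it is unique since it is the common limit of all pullback trajectories.
\<close>

lemma l1norm_nonneg: "0 \<le> l1norm v"
  by (simp add: l1norm_def sum_nonneg)

lemma l1norm_minus_commute: "l1norm (a - b) = l1norm (b - a)"
  by (simp add: l1norm_def abs_minus_commute)

lemma l1norm_triangle_diff: "l1norm (a - b) \<le> l1norm (a - c) + l1norm (c - b)"
  unfolding l1norm_def sum.distrib[symmetric] by (rule sum_mono) simp

lemma norm_le_l1norm: "norm v \<le> l1norm v"
  using norm_le_l1_cart[of v] by (simp add: l1norm_def)

lemma tendsto_l1norm_diff_zero_iff:
  "(\<lambda>n. l1norm (x n - L)) \<longlonglongrightarrow> 0 \<longleftrightarrow> x \<longlonglongrightarrow> (L::real^'k)"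
proof
  assume l1: "(\<lambda>n. l1norm (x n - L)) \<longlonglongrightarrow> 0"
  have "(\<lambda>n. norm (x n - L)) \<longlonglongrightarrow> 0"
    by (rule tendsto_sandwich[OF _ _ tendsto_const l1]) (auto simp: norm_le_l1norm)
  then show "x \<longlonglongrightarrow> L" by (simp add: tendsto_norm_zero_iff LIM_zero_iff)
next
  assume "x \<longlonglongrightarrow> L"
  then have "(\<lambda>n. l1norm (x n - L)) \<longlonglongrightarrow> l1norm (L - L)"
    unfolding l1norm_def by (intro tendsto_intros)
  then show "(\<lambda>n. l1norm (x n - L)) \<longlonglongrightarrow> 0" by (simp add: l1norm_def)
qed

lemma axis_in_simplex1: "axis i (1::real) \<in> simplex1"
  by (simp add: simplex1_def axis_def)

lemma closed_simplex1: "closed (simplex1 :: (real^'k) set)"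
  unfolding simplex1_def
  by (intro closed_Collect_conj closed_Collect_all closed_Collect_le closed_Collect_eq
      continuous_intros)

lemma column_in_simplex1: "column_stochastic A \<Longrightarrow> column i A \<in> simplex1"
  by (simp add: column_stochastic_def simplex1_def column_def)

lemma column_stochastic_mult_simplex1:
  assumes "column_stochastic A" "u \<in> simplex1"
  shows "A *v u \<in> simplex1"
proof -
  have A: "\<And>i j. 0 \<le> A$i$j" "\<And>j. (\<Sum>i\<in>UNIV. A$i$j) = 1"
    using assms(1) by (auto simp: column_stochastic_def)
  have u: "\<And>i. 0 \<le> u$i" "(\<Sum>i\<in>UNIV. u$i) = 1"
    using assms(2) by (auto simp: simplex1_def)
  have "(\<Sum>r\<in>UNIV. \<Sum>l\<in>UNIV. A$r$l * u$l) = (\<Sum>l\<in>UNIV. u$l * (\<Sum>r\<in>UNIV. A$r$l))"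
    by (subst sum.swap) (simp add: sum_distrib_left mult_ac)
  then show ?thesis
    using A u by (auto simp: simplex1_def matrix_vector_mult_def intro!: sum_nonneg)
qed

lemma column_stochastic_l1norm_mult_le:
  assumes "column_stochastic B"
  shows "l1norm (B *v w) \<le> l1norm w"
proof -
  have B: "\<And>i j. 0 \<le> B$i$j" "\<And>j. (\<Sum>i\<in>UNIV. B$i$j) = 1"
    using assms by (auto simp: column_stochastic_def)
  have "l1norm (B *v w) = (\<Sum>r\<in>UNIV. \<bar>\<Sum>l\<in>UNIV. B$r$l * w$l\<bar>)"
    by (simp add: l1norm_def matrix_vector_mult_def)
  also have "\<dots> \<le> (\<Sum>r\<in>UNIV. \<Sum>l\<in>UNIV. B$r$l * \<bar>w$l\<bar>)"
    by (rule sum_mono, rule order_trans[OF sum_abs]) (simp add: abs_mult B)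
  also have "\<dots> = (\<Sum>l\<in>UNIV. \<bar>w$l\<bar> * (\<Sum>r\<in>UNIV. B$r$l))"
    by (subst sum.swap) (simp add: sum_distrib_left mult_ac)
  also have "\<dots> = l1norm w" by (simp add: B l1norm_def)
  finally show ?thesis .
qed

definition column_diameter :: "real^'k^'k \<Rightarrow> real" where
  "column_diameter A = Max ((\<lambda>(i,j). \<Sum>r\<in>UNIV. \<bar>A$r$i - A$r$j\<bar>) ` UNIV)"

lemma column_diameter_ge: "(\<Sum>r\<in>UNIV. \<bar>A$r$i - A$r$j\<bar>) \<le> column_diameter A"
  unfolding column_diameter_def by (rule Max_ge) (auto intro: image_eqI[where x="(i,j)"])

lemma column_diameter_leI:
  assumes "\<And>i j. (\<Sum>r\<in>UNIV. \<bar>A$r$i - A$r$j\<bar>) \<le> c"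
  shows "column_diameter A \<le> c"
  unfolding column_diameter_def using assms by (subst Max_le_iff) auto

lemma column_diameter_nonneg: "0 \<le> column_diameter A"
  using column_diameter_ge[of A i i] by simp

lemma column_diameter_eq_l1norm:
  "(\<Sum>r\<in>UNIV. \<bar>A$r$i - A$r$j\<bar>) = l1norm (A *v axis i 1 - A *v axis j 1)"
  by (simp add: matrix_vector_mult_basis l1norm_def column_def)

lemma column_diameter_le_2:
  assumes "column_stochastic A"
  shows "column_diameter A \<le> 2"
proof (rule column_diameter_leI)
  fix i j
  have A: "\<And>i j. 0 \<le> A$i$j" "\<And>j. (\<Sum>i\<in>UNIV. A$i$j) = 1"
    using assms by (auto simp: column_stochastic_def)
  have "(\<Sum>r\<in>UNIV. \<bar>A$r$i - A$r$j\<bar>) \<le> (\<Sum>r\<in>UNIV. A$r$i + A$r$j)"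
    by (rule sum_mono) (use A(1) in \<open>simp add: abs_le_iff\<close>)
  also have "\<dots> = 2" by (simp add: sum.distrib A(2))
  finally show "(\<Sum>r\<in>UNIV. \<bar>A$r$i - A$r$j\<bar>) \<le> 2" .
qed

lemma matrix_vector_mult_diff_simplex1:
  assumes "u \<in> simplex1" and "v \<in> simplex1"
  shows "(A *v u - A *v v) $ r = (\<Sum>i\<in>UNIV. \<Sum>j\<in>UNIV. u$i * v$j * (A$r$i - A$r$j))"
proof -
  have "(\<Sum>i\<in>UNIV. \<Sum>j\<in>UNIV. u$i * v$j * (A$r$i - A$r$j))
      = (\<Sum>i\<in>UNIV. u$i * A$r$i) * (\<Sum>j\<in>UNIV. v$j) - (\<Sum>i\<in>UNIV. u$i) * (\<Sum>j\<in>UNIV. v$j * A$r$j)"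
    unfolding sum_product by (simp add: right_diff_distrib sum_subtractf algebra_simps)
  then show ?thesis
    using assms by (simp add: simplex1_def matrix_vector_mult_def mult.commute)
qed

lemma l1norm_mult_diff_le_column_diameter:
  assumes u: "u \<in> simplex1" and v: "v \<in> simplex1"
  shows "l1norm (A *v u - A *v v) \<le> column_diameter A"
proof -
  have u0: "\<And>i. 0 \<le> u$i" and u1: "(\<Sum>i\<in>UNIV. u$i) = 1"
    and v0: "\<And>i. 0 \<le> v$i" and v1: "(\<Sum>i\<in>UNIV. v$i) = 1"
    using u v by (auto simp: simplex1_def)
  have "l1norm (A *v u - A *v v) = (\<Sum>r\<in>UNIV. \<bar>\<Sum>i\<in>UNIV. \<Sum>j\<in>UNIV. u$i * v$j * (A$r$i - A$r$j)\<bar>)"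
    by (simp only: l1norm_def matrix_vector_mult_diff_simplex1[OF u v])
  also have "\<dots> \<le> (\<Sum>r\<in>UNIV. \<Sum>i\<in>UNIV. \<Sum>j\<in>UNIV. u$i * v$j * \<bar>A$r$i - A$r$j\<bar>)"
    by (intro sum_mono order_trans[OF sum_abs]) (simp add: abs_mult u0 v0)
  also have "\<dots> = (\<Sum>i\<in>UNIV. \<Sum>j\<in>UNIV. \<Sum>r\<in>UNIV. u$i * v$j * \<bar>A$r$i - A$r$j\<bar>)"
    by (subst sum.swap) (rule sum.cong[OF refl], rule sum.swap)
  also have "\<dots> = (\<Sum>i\<in>UNIV. \<Sum>j\<in>UNIV. u$i * v$j * (\<Sum>r\<in>UNIV. \<bar>A$r$i - A$r$j\<bar>))"
    by (simp add: sum_distrib_left)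
  also have "\<dots> \<le> (\<Sum>i\<in>UNIV. \<Sum>j\<in>UNIV. u$i * v$j * column_diameter A)"
    by (intro sum_mono mult_left_mono column_diameter_ge) (simp add: u0 v0)
  also have "\<dots> = column_diameter A"
    by (simp add: sum_distrib_right[symmetric] sum_product[symmetric] u1 v1)
  finally show ?thesis .
qed

lemma column_diameter_mult_left_le:
  assumes "column_stochastic B"
  shows "column_diameter (B ** A) \<le> column_diameter A"
proof (rule column_diameter_leI)
  fix i j
  have "(\<Sum>r\<in>UNIV. \<bar>(B ** A)$r$i - (B ** A)$r$j\<bar>) = l1norm (B *v (column i A - column j A))"
    by (simp add: l1norm_def matrix_matrix_mult_def matrix_vector_mult_def column_def
        right_diff_distrib sum_subtractf)
  also have "\<dots> \<le> l1norm (column i A - column j A)"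
    by (rule column_stochastic_l1norm_mult_le[OF assms])
  also have "\<dots> \<le> column_diameter A"
    using column_diameter_ge[of A i j] by (simp add: l1norm_def column_def)
  finally show "(\<Sum>r\<in>UNIV. \<bar>(B ** A)$r$i - (B ** A)$r$j\<bar>) \<le> column_diameter A" .
qed

lemma column_diameter_mult_right_le:
  assumes "column_stochastic B"
  shows "column_diameter (A ** B) \<le> column_diameter A"
proof (rule column_diameter_leI)
  fix i j
  have "(\<Sum>r\<in>UNIV. \<bar>(A ** B)$r$i - (A ** B)$r$j\<bar>) = l1norm (A *v column i B - A *v column j B)"
    by (simp add: l1norm_def matrix_matrix_mult_def matrix_vector_mult_def column_def)
  also have "\<dots> \<le> column_diameter A"
    by (intro l1norm_mult_diff_le_column_diameter column_in_simplex1 assms)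
  finally show "(\<Sum>r\<in>UNIV. \<bar>(A ** B)$r$i - (A ** B)$r$j\<bar>) \<le> column_diameter A" .
qed

lemma column_diameter_le_l1norm_columns:
  "column_diameter A \<le> 2 * (\<Sum>i\<in>UNIV. l1norm (A *v axis i 1 - c))"
proof (rule column_diameter_leI)
  fix i j
  have le: "l1norm (A *v axis l 1 - c) \<le> (\<Sum>i\<in>UNIV. l1norm (A *v axis i 1 - c))" for l
    by (rule member_le_sum) (auto simp: l1norm_nonneg)
  have "(\<Sum>r\<in>UNIV. \<bar>A$r$i - A$r$j\<bar>) \<le> l1norm (A *v axis i 1 - c) + l1norm (c - A *v axis j 1)"
    unfolding column_diameter_eq_l1norm by (rule l1norm_triangle_diff)
  also have "\<dots> \<le> 2 * (\<Sum>i\<in>UNIV. l1norm (A *v axis i 1 - c))"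
    using le[of i] le[of j] by (simp add: l1norm_minus_commute)
  finally show "(\<Sum>r\<in>UNIV. \<bar>A$r$i - A$r$j\<bar>) \<le> 2 * (\<Sum>i\<in>UNIV. l1norm (A *v axis i 1 - c))" .
qed

lemma column_diameter_tendsto_zeroI:
  fixes A :: "nat \<Rightarrow> real^'k^'k"
  assumes "\<And>i. (\<lambda>n. l1norm (A n *v axis i 1 - c n)) \<longlonglongrightarrow> 0"
  shows "(\<lambda>n. column_diameter (A n)) \<longlonglongrightarrow> 0"
proof (rule tendsto_sandwich[OF _ _ tendsto_const])
  show "(\<lambda>n. 2 * (\<Sum>i\<in>UNIV. l1norm (A n *v axis i 1 - c n))) \<longlonglongrightarrow> 0"
    by (intro tendsto_mult_right_zero tendsto_null_sum assms)
qed (simp_all add: column_diameter_nonneg column_diameter_le_l1norm_columns)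

lemma converges_in_distribution_iff_column_diameter:
  "converges_in_distribution M P \<longleftrightarrow> (AE \<omega> in M. (\<lambda>n. column_diameter (P n \<omega>)) \<longlonglongrightarrow> 0)"
  unfolding converges_in_distribution_def
proof (intro iffI; erule AE_mp; intro AE_I2 impI)
  fix \<omega>
  assume "\<forall>u\<in>simplex1. \<forall>v\<in>simplex1. (\<lambda>n. l1norm (P n \<omega> *v u - P n \<omega> *v v)) \<longlonglongrightarrow> 0"
  then show "(\<lambda>n. column_diameter (P n \<omega>)) \<longlonglongrightarrow> 0"
    by (intro column_diameter_tendsto_zeroI[where c="\<lambda>n. P n \<omega> *v axis undefined 1"])
      (simp add: axis_in_simplex1)
next
  fix \<omega>
  assume diameter: "(\<lambda>n. column_diameter (P n \<omega>)) \<longlonglongrightarrow> 0"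
  show "\<forall>u\<in>simplex1. \<forall>v\<in>simplex1. (\<lambda>n. l1norm (P n \<omega> *v u - P n \<omega> *v v)) \<longlonglongrightarrow> 0"
    by (intro ballI, rule tendsto_sandwich[OF _ _ tendsto_const diameter])
      (auto simp: l1norm_nonneg l1norm_mult_diff_le_column_diameter)
qed

lemma borel_measurable_vec_componentwise:
  fixes f :: "'a \<Rightarrow> real^'k"
  assumes "\<And>i. (\<lambda>x. f x $ i) \<in> borel_measurable M"
  shows "f \<in> borel_measurable M"
proof (subst borel_measurable_euclidean_space, intro ballI)
  fix b :: "real^'k"
  assume "b \<in> Basis"
  then obtain i where "b = axis i 1" by (auto simp: Basis_vec_def)
  then show "(\<lambda>x. f x \<bullet> b) \<in> borel_measurable M"
    using assms by (simp add: cart_eq_inner_axis)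
qed

lemma borel_measurable_column_diameter:
  assumes "\<And>i j. (\<lambda>x. A x $ i $ j) \<in> borel_measurable M"
  shows "(\<lambda>x. column_diameter (A x)) \<in> borel_measurable M"
  unfolding column_diameter_def case_prod_beta
  by (rule borel_measurable_Max) (auto intro!: borel_measurable_sum borel_measurable_abs
      borel_measurable_diff assms)

lemma measurable_funpow: "f \<in> M \<rightarrow>\<^sub>M M \<Longrightarrow> f ^^ n \<in> M \<rightarrow>\<^sub>M M"
  by (induction n) (auto intro: measurable_comp)

lemma distr_funpow_eq:
  assumes "f \<in> M \<rightarrow>\<^sub>M M" "distr M M f = M"
  shows "distr M M (f ^^ n) = M"
proof (induction n)
  case (Suc n)
  have "distr M M (f ^^ Suc n) = distr M M (f \<circ> f ^^ n)" by simp
  also have "\<dots> = distr (distr M M (f ^^ n)) M f"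
    by (rule distr_distr[symmetric, OF assms(1) measurable_funpow[OF assms(1)]])
  also have "\<dots> = M" using Suc assms(2) by simp
  finally show ?case .
qed simp

lemma AE_measure_preserving:
  assumes "f \<in> M \<rightarrow>\<^sub>M M" "distr M M f = M" "AE x in M. Q x"
  shows "AE x in M. Q (f x)"
  using AE_distrD[OF assms(1)] assms(2,3) by metis

lemma (in prob_space) AE_decseq_tendsto_zero_iff_integral:
  fixes h :: "nat \<Rightarrow> 'a \<Rightarrow> real"
  assumes measurable: "\<And>n. h n \<in> borel_measurable M"
    and nonneg: "\<And>n x. 0 \<le> h n x"
    and bounded: "\<And>n. AE x in M. h n x \<le> B"
    and decreasing: "AE x in M. decseq (\<lambda>n. h n x)"
  shows "(AE x in M. (\<lambda>n. h n x) \<longlonglongrightarrow> 0) \<longleftrightarrow> (\<lambda>n. integral\<^sup>L M (h n)) \<longlonglongrightarrow> 0"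
proof -
  have dominated: "AE x in M. norm (h n x) \<le> B" for n
    using bounded[of n] by eventually_elim (simp add: nonneg)
  define L where "L x = lim (\<lambda>n. h n x)" for x
  have L_measurable: "L \<in> borel_measurable M"
    unfolding L_def using measurable by measurable
  have converges: "AE x in M. (\<lambda>n. h n x) \<longlonglongrightarrow> L x"
    using decreasing by eventually_elim
      (metis L_def decseq_convergent nonneg convergent_LIMSEQ_iff convergent_def)
  then have integrable_L: "integrable M L"
    and integral_L: "(\<lambda>n. integral\<^sup>L M (h n)) \<longlonglongrightarrow> integral\<^sup>L M L"
    using integrable_dominated_convergence[OF L_measurable measurable _ _ dominated]
      integral_dominated_convergence[OF L_measurable measurable _ _ dominated] by auto
  have L_nonneg: "AE x in M. 0 \<le> L x"
    using converges by eventually_elim (rule LIMSEQ_le_const, auto simp: nonneg)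
  show ?thesis
  proof
    assume "AE x in M. (\<lambda>n. h n x) \<longlonglongrightarrow> 0"
    then show "(\<lambda>n. integral\<^sup>L M (h n)) \<longlonglongrightarrow> 0"
      using integral_dominated_convergence[of "\<lambda>_. 0" M h "\<lambda>_. B"] measurable dominated by simp
  next
    assume "(\<lambda>n. integral\<^sup>L M (h n)) \<longlonglongrightarrow> 0"
    then have "integral\<^sup>L M L = 0" using integral_L LIMSEQ_unique by blast
    then have "AE x in M. L x = 0"
      using integral_nonneg_eq_0_iff_AE[OF integrable_L L_nonneg] by simp
    with converges show "AE x in M. (\<lambda>n. h n x) \<longlonglongrightarrow> 0"
      by eventually_elim simp
  qed
qed

locale markov_random_network =
  fixes M :: "'a measure" and \<theta> :: "'a \<Rightarrow> 'a" and P :: "nat \<Rightarrow> 'a \<Rightarrow> real^'k^'k"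
  assumes invertible_mds: "invertible_mds M \<theta>"
    and transition_cocycle: "transition_cocycle M \<theta> P"
begin

sublocale prob_space M
  using invertible_mds by (simp add: invertible_mds_def)

abbreviation inv_\<theta> :: "'a \<Rightarrow> 'a" where
  "inv_\<theta> \<equiv> inv_into (space M) \<theta>"

lemma measurable_\<theta>: "\<theta> \<in> M \<rightarrow>\<^sub>M M"
  and measurable_inv_\<theta>: "inv_\<theta> \<in> M \<rightarrow>\<^sub>M M"
  and distr_\<theta>: "distr M M \<theta> = M"
  and bij_\<theta>: "bij_betw \<theta> (space M) (space M)"
  using invertible_mds by (simp_all add: invertible_mds_def)

lemma \<theta>_in_space: "x \<in> space M \<Longrightarrow> \<theta> x \<in> space M"
  and inv_\<theta>_in_space: "x \<in> space M \<Longrightarrow> inv_\<theta> x \<in> space M"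
  and \<theta>_inv_\<theta>: "x \<in> space M \<Longrightarrow> \<theta> (inv_\<theta> x) = x"
  and inv_\<theta>_\<theta>: "x \<in> space M \<Longrightarrow> inv_\<theta> (\<theta> x) = x"
  using bij_\<theta> by (auto simp: bij_betw_def inv_into_into f_inv_into_f inv_into_f_f)

lemma distr_inv_\<theta>: "distr M M inv_\<theta> = M"
proof -
  have "distr M M inv_\<theta> = distr (distr M M \<theta>) M inv_\<theta>" by (simp add: distr_\<theta>)
  also have "\<dots> = distr M M (inv_\<theta> \<circ> \<theta>)" by (rule distr_distr[OF measurable_inv_\<theta> measurable_\<theta>])
  also have "\<dots> = distr M M (\<lambda>x. x)" by (rule distr_cong) (auto simp: inv_\<theta>_\<theta>)
  finally show ?thesis by simp
qed

lemma AE_funpow_\<theta>: "AE x in M. Q x \<Longrightarrow> AE x in M. Q ((\<theta> ^^ n) x)"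
  by (rule AE_measure_preserving[OF measurable_funpow[OF measurable_\<theta>]
        distr_funpow_eq[OF measurable_\<theta> distr_\<theta>]])

lemma AE_funpow_inv_\<theta>: "AE x in M. Q x \<Longrightarrow> AE x in M. Q ((inv_\<theta> ^^ n) x)"
  by (rule AE_measure_preserving[OF measurable_funpow[OF measurable_inv_\<theta>]
        distr_funpow_eq[OF measurable_inv_\<theta> distr_inv_\<theta>]])

lemma funpow_inv_\<theta>_in_space: "x \<in> space M \<Longrightarrow> (inv_\<theta> ^^ n) x \<in> space M"
  by (induction n) (auto simp: inv_\<theta>_in_space)

lemma funpow_\<theta>_inv_\<theta>: "x \<in> space M \<Longrightarrow> (\<theta> ^^ n) ((inv_\<theta> ^^ n) x) = x"
proof (induction n arbitrary: x)
  case (Suc n)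
  have "(\<theta> ^^ Suc n) ((inv_\<theta> ^^ Suc n) x) = \<theta> ((\<theta> ^^ n) ((inv_\<theta> ^^ n) (inv_\<theta> x)))"
    by (simp only: funpow.simps(2)[where f=\<theta>] funpow_Suc_right[where f=inv_\<theta>] comp_apply)
  then show ?case using Suc by (simp add: inv_\<theta>_in_space \<theta>_inv_\<theta>)
qed simp

lemma funpow_inv_\<theta>_\<theta>: "x \<in> space M \<Longrightarrow> (inv_\<theta> ^^ n) ((\<theta> ^^ n) x) = x"
proof (induction n arbitrary: x)
  case (Suc n)
  have "(inv_\<theta> ^^ Suc n) ((\<theta> ^^ Suc n) x) = inv_\<theta> ((inv_\<theta> ^^ n) ((\<theta> ^^ n) (\<theta> x)))"
    by (simp only: funpow.simps(2)[where f=inv_\<theta>] funpow_Suc_right[where f=\<theta>] comp_apply)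
  then show ?case using Suc by (simp add: \<theta>_in_space inv_\<theta>_\<theta>)
qed simp

definition cocycle_at :: "'a \<Rightarrow> bool" where
  "cocycle_at \<omega> \<longleftrightarrow> (\<forall>n. column_stochastic (P n \<omega>)) \<and> P 0 \<omega> = mat 1 \<and>
     (\<forall>m n. P (m + n) \<omega> = P m ((\<theta> ^^ n) \<omega>) ** P n \<omega>)"

definition regular :: "'a \<Rightarrow> bool" where
  "regular \<omega> \<longleftrightarrow> \<omega> \<in> space M \<and> (\<forall>j. cocycle_at ((\<theta> ^^ j) \<omega>)) \<and>
     (\<forall>j. cocycle_at ((inv_\<theta> ^^ j) \<omega>))"

lemma AE_regular: "AE \<omega> in M. regular \<omega>"
proof -
  have cocycle: "AE \<omega> in M. cocycle_at \<omega>"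
    using transition_cocycle by (simp add: transition_cocycle_def cocycle_at_def)
  have "AE \<omega> in M. \<forall>j. cocycle_at ((\<theta> ^^ j) \<omega>)"
    by (simp add: AE_all_countable AE_funpow_\<theta>[OF cocycle])
  moreover have "AE \<omega> in M. \<forall>j. cocycle_at ((inv_\<theta> ^^ j) \<omega>)"
    by (simp add: AE_all_countable AE_funpow_inv_\<theta>[OF cocycle])
  ultimately show ?thesis
    using AE_space by eventually_elim (simp add: regular_def)
qed

definition pullback_matrix :: "nat \<Rightarrow> 'a \<Rightarrow> real^'k^'k" where
  "pullback_matrix n \<omega> = P n ((inv_\<theta> ^^ n) \<omega>)"

lemma
  assumes "regular \<omega>"
  shows column_stochastic_forward: "column_stochastic (P n ((\<theta> ^^ m) \<omega>))"
    and column_stochastic_backward: "column_stochastic (P n ((inv_\<theta> ^^ m) \<omega>))"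
  using assms by (simp_all add: regular_def cocycle_at_def)

lemma cocycle_backward:
  assumes "regular \<omega>"
  shows "P (m + n) ((inv_\<theta> ^^ j) \<omega>) = P m ((\<theta> ^^ n) ((inv_\<theta> ^^ j) \<omega>)) ** P n ((inv_\<theta> ^^ j) \<omega>)"
  using assms by (simp add: regular_def cocycle_at_def)

lemma forward_matrix_Suc:
  assumes "regular \<omega>"
  shows "P (Suc n) \<omega> = P 1 ((\<theta> ^^ n) \<omega>) ** P n \<omega>"
  using cocycle_backward[OF assms, of 1 n 0] by simp

lemma pullback_matrix_add:
  assumes "regular \<omega>"
  shows "pullback_matrix (n + j) \<omega> = pullback_matrix n \<omega> ** P j ((inv_\<theta> ^^ (n + j)) \<omega>)"
proof -
  have "(\<theta> ^^ j) ((inv_\<theta> ^^ (n + j)) \<omega>) = (inv_\<theta> ^^ n) \<omega>"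
    using assms funpow_\<theta>_inv_\<theta>[OF funpow_inv_\<theta>_in_space]
    by (simp add: regular_def funpow_add add.commute)
  then show ?thesis
    using cocycle_backward[OF assms, of n j "n + j"] by (simp add: pullback_matrix_def)
qed

lemma pullback_matrix_shift:
  assumes "regular \<omega>"
  shows "pullback_matrix (j + n) ((\<theta> ^^ n) \<omega>) = P n \<omega> ** pullback_matrix j \<omega>"
proof -
  have "\<omega> \<in> space M" using assms by (simp add: regular_def)
  then have "(inv_\<theta> ^^ (j + n)) ((\<theta> ^^ n) \<omega>) = (inv_\<theta> ^^ j) \<omega>"
    and "(\<theta> ^^ j) ((inv_\<theta> ^^ j) \<omega>) = \<omega>"
    by (simp_all add: funpow_add funpow_inv_\<theta>_\<theta> funpow_\<theta>_inv_\<theta>)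
  then show ?thesis
    using cocycle_backward[OF assms, of n j j] by (simp add: pullback_matrix_def add.commute)
qed

lemma decseq_column_diameter_forward:
  assumes "regular \<omega>"
  shows "decseq (\<lambda>n. column_diameter (P n \<omega>))"
  by (rule decseq_SucI) (simp add: forward_matrix_Suc[OF assms] column_diameter_mult_left_le
      column_stochastic_forward[OF assms])

lemma decseq_column_diameter_pullback:
  assumes "regular \<omega>"
  shows "decseq (\<lambda>n. column_diameter (pullback_matrix n \<omega>))"
proof (rule decseq_SucI)
  fix n
  have "pullback_matrix (Suc n) \<omega> = pullback_matrix n \<omega> ** P 1 ((inv_\<theta> ^^ (n + 1)) \<omega>)"
    using pullback_matrix_add[OF assms, of n 1] by (simp only: Suc_eq_plus1)
  then show "column_diameter (pullback_matrix (Suc n) \<omega>) \<le> column_diameter (pullback_matrix n \<omega>)"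
    by (simp only: column_diameter_mult_right_le column_stochastic_backward[OF assms])
qed

lemma borel_measurable_P: "(\<lambda>\<omega>. P n \<omega> $ i $ j) \<in> borel_measurable M"
  using transition_cocycle by (simp add: transition_cocycle_def)

lemma borel_measurable_pullback_matrix: "(\<lambda>\<omega>. pullback_matrix n \<omega> $ i $ j) \<in> borel_measurable M"
  unfolding pullback_matrix_def
  by (rule measurable_compose[OF measurable_funpow[OF measurable_inv_\<theta>] borel_measurable_P])

lemma integral_column_diameter_pullback:
  "integral\<^sup>L M (\<lambda>\<omega>. column_diameter (pullback_matrix n \<omega>)) = integral\<^sup>L M (\<lambda>\<omega>. column_diameter (P n \<omega>))"
  using integral_distr[OF measurable_funpow[OF measurable_inv_\<theta>]
      borel_measurable_column_diameter[OF borel_measurable_P], of n n]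
  by (simp add: distr_funpow_eq[OF measurable_inv_\<theta> distr_inv_\<theta>] pullback_matrix_def)

lemma AE_column_diameter_forward_iff_pullback:
  "(AE \<omega> in M. (\<lambda>n. column_diameter (P n \<omega>)) \<longlonglongrightarrow> 0) \<longleftrightarrow>
   (AE \<omega> in M. (\<lambda>n. column_diameter (pullback_matrix n \<omega>)) \<longlonglongrightarrow> 0)"
proof -
  have bounded_forward: "AE \<omega> in M. column_diameter (P n \<omega>) \<le> 2"
    and bounded_pullback: "AE \<omega> in M. column_diameter (pullback_matrix n \<omega>) \<le> 2" for n
    using AE_regular column_stochastic_forward[of _ n 0] column_stochastic_backward[of _ n n]
    by (auto elim: AE_mp simp: column_diameter_le_2 pullback_matrix_def)
  have decseq_forward: "AE \<omega> in M. decseq (\<lambda>n. column_diameter (P n \<omega>))"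
    and decseq_pullback: "AE \<omega> in M. decseq (\<lambda>n. column_diameter (pullback_matrix n \<omega>))"
    using AE_regular by (auto elim: AE_mp
        simp: decseq_column_diameter_forward decseq_column_diameter_pullback)
  have "(AE \<omega> in M. (\<lambda>n. column_diameter (P n \<omega>)) \<longlonglongrightarrow> 0) \<longleftrightarrow>
      (\<lambda>n. integral\<^sup>L M (\<lambda>\<omega>. column_diameter (P n \<omega>))) \<longlonglongrightarrow> 0"
    by (rule AE_decseq_tendsto_zero_iff_integral[OF borel_measurable_column_diameter[OF
          borel_measurable_P] column_diameter_nonneg bounded_forward decseq_forward])
  also have "\<dots> \<longleftrightarrow> (\<lambda>n. integral\<^sup>L M (\<lambda>\<omega>. column_diameter (pullback_matrix n \<omega>))) \<longlonglongrightarrow> 0"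
    by (simp add: integral_column_diameter_pullback)
  also have "\<dots> \<longleftrightarrow> (AE \<omega> in M. (\<lambda>n. column_diameter (pullback_matrix n \<omega>)) \<longlonglongrightarrow> 0)"
    by (rule AE_decseq_tendsto_zero_iff_integral[symmetric, OF borel_measurable_column_diameter[OF
          borel_measurable_pullback_matrix] column_diameter_nonneg bounded_pullback decseq_pullback])
  finally show ?thesis .
qed

definition pullback_orbit :: "nat \<Rightarrow> 'a \<Rightarrow> real^'k" where
  "pullback_orbit n \<omega> = pullback_matrix n \<omega> *v axis undefined 1"

text \<open>The limit is only guaranteed to exist almost everywhere, while an invariant distribution must
  take values in the simplex on all of \<open>space M\<close>; hence the fallback vertex.\<close>
definition pullback_limit :: "'a \<Rightarrow> real^'k" where
  "pullback_limit \<omega> =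
     (if lim (\<lambda>n. pullback_orbit n \<omega>) \<in> simplex1 then lim (\<lambda>n. pullback_orbit n \<omega>)
      else axis undefined 1)"

lemma pullback_limit_in_simplex1: "pullback_limit \<omega> \<in> simplex1"
  by (simp add: pullback_limit_def axis_in_simplex1)

lemma pullback_orbit_in_simplex1: "regular \<omega> \<Longrightarrow> pullback_orbit n \<omega> \<in> simplex1"
  unfolding pullback_orbit_def pullback_matrix_def
  by (intro column_stochastic_mult_simplex1 column_stochastic_backward axis_in_simplex1)

lemma l1norm_pullback_orbit_diff_le:
  assumes "regular \<omega>" and "n \<le> m"
  shows "l1norm (pullback_orbit m \<omega> - pullback_orbit n \<omega>) \<le> column_diameter (pullback_matrix n \<omega>)"
proof -
  obtain j where m: "m = n + j" using \<open>n \<le> m\<close> le_Suc_ex by blast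
  let ?v = "P j ((inv_\<theta> ^^ (n + j)) \<omega>) *v axis undefined 1"
  have "pullback_orbit m \<omega> = pullback_matrix n \<omega> *v ?v"
    by (simp add: pullback_orbit_def m pullback_matrix_add[OF assms(1)] matrix_vector_mul_assoc)
  moreover have "?v \<in> simplex1"
    by (intro column_stochastic_mult_simplex1 column_stochastic_backward assms(1) axis_in_simplex1)
  ultimately show ?thesis
    by (simp add: pullback_orbit_def l1norm_mult_diff_le_column_diameter axis_in_simplex1)
qed

lemma pullback_orbit_tendsto:
  assumes regular: "regular \<omega>"
    and diameter: "(\<lambda>n. column_diameter (pullback_matrix n \<omega>)) \<longlonglongrightarrow> 0"
  shows "(\<lambda>n. pullback_orbit n \<omega>) \<longlonglongrightarrow> pullback_limit \<omega>"
proof -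
  have "Cauchy (\<lambda>n. pullback_orbit n \<omega>)"
  proof (rule CauchyI)
    fix r :: real
    assume "0 < r"
    then obtain N where N: "column_diameter (pullback_matrix N \<omega>) < r / 2"
      using order_tendstoD(2)[OF diameter, of "r / 2"] by (auto simp: eventually_sequentially)
    have "norm (pullback_orbit m \<omega> - pullback_orbit n \<omega>) < r" if "N \<le> m" "N \<le> n" for m n
    proof -
      have "norm (pullback_orbit m \<omega> - pullback_orbit n \<omega>)
          \<le> l1norm (pullback_orbit m \<omega> - pullback_orbit N \<omega>) + l1norm (pullback_orbit N \<omega> - pullback_orbit n \<omega>)"
        using norm_le_l1norm l1norm_triangle_diff order_trans by blast
      also have "\<dots> \<le> 2 * column_diameter (pullback_matrix N \<omega>)"
        using l1norm_pullback_orbit_diff_le[OF regular that(1)] l1norm_pullback_orbit_diff_le[OF regular that(2)]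
          l1norm_minus_commute[of "pullback_orbit N \<omega>" "pullback_orbit n \<omega>"] by linarith
      finally show ?thesis using N by simp
    qed
    then show "\<exists>M. \<forall>m\<ge>M. \<forall>n\<ge>M. norm (pullback_orbit m \<omega> - pullback_orbit n \<omega>) < r" by blast
  qed
  then have limit: "(\<lambda>n. pullback_orbit n \<omega>) \<longlonglongrightarrow> lim (\<lambda>n. pullback_orbit n \<omega>)"
    by (simp add: Cauchy_convergent_iff convergent_LIMSEQ_iff)
  moreover have "lim (\<lambda>n. pullback_orbit n \<omega>) \<in> simplex1"
    by (rule closed_sequentially[OF closed_simplex1 _ limit]) (simp add: pullback_orbit_in_simplex1[OF regular])
  ultimately show ?thesis by (simp add: pullback_limit_def)
qed

lemma borel_measurable_pullback_limit: "pullback_limit \<in> borel_measurable M"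
proof -
  have orbit: "(\<lambda>\<omega>. pullback_orbit n \<omega>) \<in> borel_measurable M" for n
    unfolding pullback_orbit_def matrix_vector_mult_def
    by (intro borel_measurable_vec_componentwise)
      (simp add: borel_measurable_sum borel_measurable_times borel_measurable_pullback_matrix)
  have lim: "(\<lambda>\<omega>. lim (\<lambda>n. pullback_orbit n \<omega>)) \<in> borel_measurable M"
    by (rule borel_measurable_lim_metric[OF orbit])
  have limit_in_simplex1: "{\<omega> \<in> space M. lim (\<lambda>n. pullback_orbit n \<omega>) \<in> simplex1} \<in> sets M"
    using measurable_sets[OF lim borel_closed[OF closed_simplex1]] by (simp add: vimage_def Int_def conj_commute)
  show ?thesis
    unfolding pullback_limit_def by (rule measurable_If[OF lim _ limit_in_simplex1]) simp
qed

lemma invariant_distribution_pullback_limit: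
  assumes "AE \<omega> in M. (\<lambda>n. column_diameter (pullback_matrix n \<omega>)) \<longlonglongrightarrow> 0"
  shows "invariant_distribution M \<theta> P pullback_limit"
  unfolding invariant_distribution_def
proof (intro conjI allI ballI borel_measurable_pullback_limit pullback_limit_in_simplex1)
  fix n
  show "AE \<omega> in M. P n \<omega> *v pullback_limit \<omega> = pullback_limit ((\<theta> ^^ n) \<omega>)"
    using AE_regular assms
  proof eventually_elim
    case (elim \<omega>)
    have "(\<lambda>j. P n \<omega> *v pullback_orbit j \<omega>) \<longlonglongrightarrow> P n \<omega> *v pullback_limit \<omega>"
      by (intro bounded_linear.tendsto[OF matrix_vector_mul_bounded_linear] pullback_orbit_tendsto elim)
    moreover have "P n \<omega> *v pullback_orbit j \<omega> = pullback_orbit (j + n) ((\<theta> ^^ n) \<omega>)" for j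
      by (simp add: pullback_orbit_def pullback_matrix_shift[OF elim(1)] matrix_vector_mul_assoc)
    ultimately have "(\<lambda>j. pullback_orbit j ((\<theta> ^^ n) \<omega>)) \<longlonglongrightarrow> P n \<omega> *v pullback_limit \<omega>"
      using LIMSEQ_offset by fastforce
    moreover have "P n \<omega> *v pullback_limit \<omega> \<in> simplex1"
      using column_stochastic_forward[OF elim(1), of n 0]
      by (simp add: column_stochastic_mult_simplex1 pullback_limit_in_simplex1)
    ultimately show ?case by (simp add: pullback_limit_def limI)
  qed
qed

lemma pullback_attracting_column_diameter:
  assumes "pullback_attracting M \<theta> P p"
  shows "AE \<omega> in M. (\<lambda>n. column_diameter (pullback_matrix n \<omega>)) \<longlonglongrightarrow> 0"
proof -
  have "AE \<omega> in M. \<forall>i. (\<lambda>n. l1norm (pullback_matrix n \<omega> *v axis i 1 - p \<omega>)) \<longlonglongrightarrow> 0"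
    using assms axis_in_simplex1
    unfolding AE_all_countable pullback_attracting_def pullback_matrix_def by blast
  then show ?thesis
  proof eventually_elim
    case (elim \<omega>)
    then show ?case by (intro column_diameter_tendsto_zeroI[where c="\<lambda>n. p \<omega>"]) blast
  qed
qed

lemma forward_attracting_column_diameter:
  assumes "forward_attracting M \<theta> P p"
  shows "AE \<omega> in M. (\<lambda>n. column_diameter (P n \<omega>)) \<longlonglongrightarrow> 0"
proof -
  have "AE \<omega> in M. \<forall>i. (\<lambda>n. l1norm (P n \<omega> *v axis i 1 - p ((\<theta> ^^ n) \<omega>))) \<longlonglongrightarrow> 0"
    using assms axis_in_simplex1 unfolding AE_all_countable forward_attracting_def by blast
  then show ?thesis
  proof eventually_elim
    case (elim \<omega>)
    then show ?case by (intro column_diameter_tendsto_zeroI[where c="\<lambda>n. p ((\<theta> ^^ n) \<omega>)"]) blast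
  qed
qed

lemma invariant_pullback_attracting:
  assumes diameter: "AE \<omega> in M. (\<lambda>n. column_diameter (pullback_matrix n \<omega>)) \<longlonglongrightarrow> 0"
    and invariant: "invariant_distribution M \<theta> P p"
  shows "pullback_attracting M \<theta> P p"
  unfolding pullback_attracting_def
proof
  fix q :: "real^'k"
  assume q: "q \<in> simplex1"
  have "AE \<omega> in M. \<forall>n. P n ((inv_\<theta> ^^ n) \<omega>) *v p ((inv_\<theta> ^^ n) \<omega>) = p ((\<theta> ^^ n) ((inv_\<theta> ^^ n) \<omega>))"
    using invariant AE_funpow_inv_\<theta> unfolding AE_all_countable invariant_distribution_def by blast
  then have "AE \<omega> in M. \<forall>n. pullback_matrix n \<omega> *v p ((inv_\<theta> ^^ n) \<omega>) = p \<omega>"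
    using AE_space by eventually_elim (simp add: funpow_\<theta>_inv_\<theta> pullback_matrix_def)
  with AE_space diameter
  show "AE \<omega> in M. (\<lambda>n. l1norm (P n ((inv_\<theta> ^^ n) \<omega>) *v q - p \<omega>)) \<longlonglongrightarrow> 0"
  proof eventually_elim
    case (elim \<omega>)
    have "p ((inv_\<theta> ^^ n) \<omega>) \<in> simplex1" for n
      using invariant funpow_inv_\<theta>_in_space[OF elim(1)] by (simp add: invariant_distribution_def)
    then have le: "l1norm (pullback_matrix n \<omega> *v q - p \<omega>) \<le> column_diameter (pullback_matrix n \<omega>)" for n
      using l1norm_mult_diff_le_column_diameter[OF q] elim(3) by metis
    show ?case
      unfolding pullback_matrix_def[symmetric]
      by (rule tendsto_sandwich[OF _ _ tendsto_const elim(2)]) (auto simp: le l1norm_nonneg)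
  qed
qed

lemma invariant_forward_attracting:
  assumes diameter: "AE \<omega> in M. (\<lambda>n. column_diameter (P n \<omega>)) \<longlonglongrightarrow> 0"
    and invariant: "invariant_distribution M \<theta> P p"
  shows "forward_attracting M \<theta> P p"
  unfolding forward_attracting_def
proof
  fix q :: "real^'k"
  assume q: "q \<in> simplex1"
  have "AE \<omega> in M. \<forall>n. P n \<omega> *v p \<omega> = p ((\<theta> ^^ n) \<omega>)"
    using invariant by (simp add: AE_all_countable invariant_distribution_def)
  with AE_space diameter
  show "AE \<omega> in M. (\<lambda>n. l1norm (P n \<omega> *v q - p ((\<theta> ^^ n) \<omega>))) \<longlonglongrightarrow> 0"
  proof eventually_elim
    case (elim \<omega>)
    have "p \<omega> \<in> simplex1"
      using invariant elim(1) by (simp add: invariant_distribution_def)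
    then have le: "l1norm (P n \<omega> *v q - p ((\<theta> ^^ n) \<omega>)) \<le> column_diameter (P n \<omega>)" for n
      using l1norm_mult_diff_le_column_diameter[OF q] elim(3) by metis
    show ?case
      by (rule tendsto_sandwich[OF _ _ tendsto_const elim(2)]) (auto simp: le l1norm_nonneg)
  qed
qed

lemma pullback_attracting_unique:
  assumes "pullback_attracting M \<theta> P p" and "pullback_attracting M \<theta> P p'"
  shows "AE \<omega> in M. p \<omega> = p' \<omega>"
proof -
  have "AE \<omega> in M. (\<lambda>n. P n ((inv_\<theta> ^^ n) \<omega>) *v axis undefined 1) \<longlonglongrightarrow> p \<omega>"
    and "AE \<omega> in M. (\<lambda>n. P n ((inv_\<theta> ^^ n) \<omega>) *v axis undefined 1) \<longlonglongrightarrow> p' \<omega>"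
    using assms axis_in_simplex1
    unfolding pullback_attracting_def tendsto_l1norm_diff_zero_iff by blast+
  then show ?thesis
    by eventually_elim (rule LIMSEQ_unique)
qed

end

theorem lemma2p6:
  fixes M :: "'a measure" and \<theta> :: "'a \<Rightarrow> 'a"
    and P :: "nat \<Rightarrow> 'a \<Rightarrow> real ^ 'k ^ 'k"
  assumes "CARD('k) \<ge> 2"
    and "invertible_mds M \<theta>"
    and "transition_cocycle M \<theta> P"
  shows "(converges_in_distribution M P \<longleftrightarrow>
           (\<exists>p. invariant_distribution M \<theta> P p \<and> pullback_attracting M \<theta> P p))
       \<and> ((\<exists>p. invariant_distribution M \<theta> P p \<and> pullback_attracting M \<theta> P p) \<longleftrightarrow>
           (\<exists>p. invariant_distribution M \<theta> P p \<and> forward_attracting M \<theta> P p))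
       \<and> (\<forall>p p'. invariant_distribution M \<theta> P p \<and>
                   (pullback_attracting M \<theta> P p \<or> forward_attracting M \<theta> P p) \<and>
                 invariant_distribution M \<theta> P p' \<and>
                   (pullback_attracting M \<theta> P p' \<or> forward_attracting M \<theta> P p')
                 \<longrightarrow> (AE \<omega> in M. p \<omega> = p' \<omega>))"
proof -
  interpret markov_random_network M \<theta> P
    using assms(2,3) by unfold_locales
  let ?forward = "AE \<omega> in M. (\<lambda>n. column_diameter (P n \<omega>)) \<longlonglongrightarrow> 0"
  have pullback_iff_forward:
    "invariant_distribution M \<theta> P p \<Longrightarrow> pullback_attracting M \<theta> P p \<longleftrightarrow> forward_attracting M \<theta> P p"
    for p
    using pullback_attracting_column_diameter forward_attracting_column_diameter
      invariant_pullback_attracting invariant_forward_attracting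
      AE_column_diameter_forward_iff_pullback by blast
  have "converges_in_distribution M P \<longleftrightarrow> ?forward"
    by (rule converges_in_distribution_iff_column_diameter)
  moreover have "?forward \<longleftrightarrow> (\<exists>p. invariant_distribution M \<theta> P p \<and> pullback_attracting M \<theta> P p)"
    using AE_column_diameter_forward_iff_pullback invariant_distribution_pullback_limit
      invariant_pullback_attracting pullback_attracting_column_diameter by blast
  ultimately show ?thesis
    using pullback_iff_forward pullback_attracting_unique by blast
qed

end
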